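(* Let $n\ge 1$ and let $J=\begin{pmatrix}0 & I_n\\ -I_n & 0\end{pmatrix}\in\mathbb{R}^{2n\times 2n}$. Let $L\in\mathbb{C}^{2n\times 2n}$ be a complex symmetric matrix ($L=L^T$) such that $J^{-1}L$ is diagonalizable. Then there exist invertible matrices $P,Q\in \mathrm{GL}(2n,\mathbb{C})$ and a diagonal matrix $\Lambda=\mathrm{diag}(\lambda_1,\dots,\lambda_n)\in\mathbb{C}^{n\times n}$ such that $$PLQ=\begin{pmatrix}0&\Lambda\\ \Lambda&0\end{pmatrix}\qquad\text{and}\qquad PJQ=J.$$ In particular, the eigenvalues of $J^{-1}L$ (counted with multiplicity) come in pairs $\pm\lambda_i$, $i=1,\dots,n$.
   Context: $I_n$ denotes the $n\times n$ identity matrix and $J$ is the standard symplectic form, which satisfies $J^T=J^{-1}=-J$. Transposition $^T$ is the ordinary (non-conjugating) transpose. *)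

theory Defs
  imports "Jordan_Normal_Form.Matrix" "Jordan_Normal_Form.Char_Poly"
begin

definition symp_J :: "nat \<Rightarrow> complex mat" where
  "symp_J n = four_block_mat (0\<^sub>m n n) (1\<^sub>m n) (- 1\<^sub>m n) (0\<^sub>m n n)"

definition diagonalizable :: "complex mat \<Rightarrow> bool" where
  "diagonalizable A \<longleftrightarrow> (\<exists>D. diagonal_mat D \<and> similar_mat A D)"

definition diag_of :: "nat \<Rightarrow> (nat \<Rightarrow> complex) \<Rightarrow> complex mat" where
  "diag_of n lam = mat n n (\<lambda>(i,j). if i = j then lam i else 0)"

end

theory Submission
  imports Defs
begin

text \<open>
  Put \<open>A = J\<^sup>-\<^sup>1 L\<close>. Since \<open>L\<close> is symmetric and \<open>J\<^sup>T = J\<^sup>-\<^sup>1 = -J\<close>, the transpose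
  \<open>A\<^sup>T = L J = J (-A) J\<^sup>-\<^sup>1\<close> is similar to \<open>-A\<close>, so \<open>A\<close> and \<open>-A\<close> have the same
  characteristic polynomial. For diagonalizable \<open>A\<close> the multiset of eigenvalues is therefore
  closed under negation and has even size, hence splits as \<open>{\<lambda>\<^sub>i} + {-\<lambda>\<^sub>i}\<close>, and \<open>A\<close> is
  similar to \<open>diag(\<Lambda>, -\<Lambda>)\<close>, say \<open>A = S diag(\<Lambda>, -\<Lambda>) S\<^sup>-\<^sup>1\<close>. Then \<open>P = S\<^sup>-\<^sup>1 J\<^sup>-\<^sup>1\<close> and
  \<open>Q = S J\<close> satisfy \<open>P J Q = J\<close> and \<open>P L Q = diag(\<Lambda>, -\<Lambda>) J\<close>, which is the antidiagonal
  block matrix with blocks \<open>\<Lambda>\<close>.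
\<close>

lemma proots_prod_linear_factors:
  "proots (\<Prod>a\<leftarrow>as. [:- a, 1:]) = mset (as :: 'a :: idom list)"
proof (induction as)
  case (Cons a as)
  have "proots ([:- a, 1:] * (\<Prod>a\<leftarrow>as. [:- a, 1:])) = proots [:- a, 1:] + mset as"
    by (subst proots_mult) (auto simp: prod_list_zero_iff Cons.IH)
  then show ?case using proots_linear_factor[of "- a"] by simp
qed simp

lemma diagonal_imp_upper_triangular:
  "A \<in> carrier_mat n n \<Longrightarrow> diagonal_mat A \<Longrightarrow> upper_triangular A"
  unfolding diagonal_mat_def upper_triangular_def by auto

lemma proots_char_poly_diagonal:
  fixes A :: "'a :: idom mat"
  assumes "A \<in> carrier_mat n n" and "diagonal_mat A"
  shows "proots (char_poly A) = mset (diag_mat A)"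
  using char_poly_upper_triangular[OF assms(1) diagonal_imp_upper_triangular[OF assms]]
  by (simp add: proots_prod_linear_factors)

lemma mset_pairs_if_uminus_invariant:
  fixes M :: "'a :: {idom, ring_char_0} multiset"
  assumes "image_mset uminus M = M" and "even (size M)"
  shows "\<exists>xs. M = mset xs + mset (map uminus xs)"
  using assms
proof (induction "size M" arbitrary: M rule: less_induct)
  case less
  show ?case
  proof (cases "set_mset M \<subseteq> {0}")
    case True
    then have "M = replicate_mset (size M) 0"
      by (metis set_mset_subset_singletonD)
    moreover obtain k where "size M = 2 * k" using less.prems(2) by auto
    ultimately have "M = mset (replicate k 0) + mset (map uminus (replicate k 0))"
      by (simp add: multiset_eq_iff)
    then show ?thesis by blast
  next
    case False
    then obtain x where x: "x \<in># M" "x \<noteq> 0" by blast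
    have "- x \<in># image_mset uminus M" using x(1) by simp
    then have "- x \<in># M - {#x#}"
      using x less.prems(1) by (simp add: in_diff_count)
    then obtain M' where M: "M = M' + {#x, - x#}"
      using x(1) by (metis add_mset_add_single insert_DiffM union_mset_add_mset_right)
    have "image_mset uminus M' + {#x, - x#} = M' + {#x, - x#}"
      using less.prems(1) unfolding M by (simp add: add_mset_commute)
    then have "image_mset uminus M' = M'" by (rule add_right_imp_eq)
    moreover have "size M = size M' + 2" using M by simp
    ultimately obtain xs where "M' = mset xs + mset (map uminus xs)"
      using less.hyps less.prems(2) by fastforce
    then have "M = mset (x # xs) + mset (map uminus (x # xs))"
      using M by simp
    then show ?thesis by blast
  qed
qed

lemma similar_mat_uminus:
  fixes A B :: "'a :: comm_ring_1 mat"
  assumes "similar_mat A B" shows "similar_mat (- A) (- B)"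
proof -
  obtain n P Q where "{A, B, P, Q} \<subseteq> carrier_mat n n" "P * Q = 1\<^sub>m n" "Q * P = 1\<^sub>m n" "A = P * B * Q"
    using similar_matD[OF assms] by blast
  then show ?thesis by (intro similar_matI[of _ _ P Q n]) auto
qed

lemma similar_mat_diagonal_if_mset_diag_eq:
  fixes D1 D2 :: "'a :: field mat"
  assumes D1: "D1 \<in> carrier_mat N N" and D2: "D2 \<in> carrier_mat N N"
    and "diagonal_mat D1" and "diagonal_mat D2"
    and "mset (diag_mat D1) = mset (diag_mat D2)"
  shows "similar_mat D1 D2"
proof -
  have len: "length (diag_mat D2) = N" using D2 by (simp add: diag_mat_def)
  obtain p where p: "p permutes {..<N}" "permute_list p (diag_mat D2) = diag_mat D1"
    using mset_eq_permutation[OF assms(5)] len by metis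
  have p_lt: "p i < N" if "i < N" for i using p(1) that permutes_in_image by fastforce
  have p_eq_iff: "p i = p k \<longleftrightarrow> i = k" for i k using p(1) permutes_inj by (metis injD)
  have diag: "D1 $$ (i, i) = D2 $$ (p i, p i)" if i: "i < N" for i
  proof -
    have "diag_mat D1 ! i = diag_mat D2 ! p i"
      using p i len permute_list_nth[of p "diag_mat D2" i] by simp
    then show ?thesis using i p_lt[OF i] D1 D2 by (simp add: diag_mat_def)
  qed
  define P :: "'a mat" where "P = mat N N (\<lambda>(i, j). of_bool (p i = j))"
  define Q :: "'a mat" where "Q = mat N N (\<lambda>(i, j). of_bool (i = p j))"
  have P_mult: "(P * B) $$ (i, l) = B $$ (p i, l)"
    if "B \<in> carrier_mat N N" "i < N" "l < N" for B i l
  proof -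
    have "{0..<N} \<inter> {j. p i = j} = {p i}" using p_lt that(2) by auto
    then show ?thesis using that unfolding P_def by (simp add: scalar_prod_def)
  qed
  have mult_Q: "(B * Q) $$ (i, k) = B $$ (i, p k)"
    if "B \<in> carrier_mat N N" "i < N" "k < N" for B i k
  proof -
    have "{0..<N} \<inter> {j. j = p k} = {p k}" using p_lt that(3) by auto
    then show ?thesis using that unfolding Q_def by (simp add: scalar_prod_def)
  qed
  have P: "P \<in> carrier_mat N N" and Q: "Q \<in> carrier_mat N N" unfolding P_def Q_def by auto
  have PQ: "P * Q = 1\<^sub>m N"
  proof (rule eq_matI)
    fix i k assume "i < dim_row (1\<^sub>m N)" "k < dim_col (1\<^sub>m N)"
    then show "(P * Q) $$ (i, k) = 1\<^sub>m N $$ (i, k)"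
      using P_mult[OF Q, of i k] p_lt p_eq_iff by (simp add: Q_def)
  qed (use P Q in auto)
  have QP: "Q * P = 1\<^sub>m N" by (rule mat_mult_left_right_inverse[OF P Q PQ])
  have "D1 = P * D2 * Q"
  proof (rule eq_matI)
    fix i k assume "i < dim_row (P * D2 * Q)" "k < dim_col (P * D2 * Q)"
    then have i: "i < N" and k: "k < N" using P Q by auto
    have "(P * D2 * Q) $$ (i, k) = D2 $$ (p i, p k)"
      using i k P D2 mult_Q[of "P * D2" i k] P_mult[of D2 i "p k"] by (simp add: p_lt)
    also have "\<dots> = D1 $$ (i, k)"
      using assms(3,4) D1 D2 i k p_lt diag p_eq_iff unfolding diagonal_mat_def by (cases "i = k") auto
    finally show "D1 $$ (i, k) = (P * D2 * Q) $$ (i, k)" by simp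
  qed (use D1 P Q in auto)
  then show ?thesis
    using D1 D2 P Q PQ QP by (intro similar_matI[of _ _ P Q N]) auto
qed

lemma invertible_mat_if_right_inverse:
  fixes A B :: "'a :: field mat"
  assumes "A \<in> carrier_mat n n" "B \<in> carrier_mat n n" "A * B = 1\<^sub>m n"
  shows "invertible_mat A"
  using assms mat_mult_left_right_inverse[OF assms]
  unfolding invertible_mat_def inverts_mat_def by auto

lemma symp_J_carrier: "symp_J n \<in> carrier_mat (2 * n) (2 * n)"
  unfolding symp_J_def mult_2 by (rule four_block_carrier_mat) auto

lemma symp_J_mult_self: "symp_J n * symp_J n = - 1\<^sub>m (2 * n)"
proof -
  have "symp_J n * symp_J n = four_block_mat (0\<^sub>m n n * 0\<^sub>m n n + 1\<^sub>m n * - 1\<^sub>m n) (0\<^sub>m n n * 1\<^sub>m n + 1\<^sub>m n * 0\<^sub>m n n)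
    (- 1\<^sub>m n * 0\<^sub>m n n + 0\<^sub>m n n * - 1\<^sub>m n) (- 1\<^sub>m n * 1\<^sub>m n + 0\<^sub>m n n * 0\<^sub>m n n)"
    unfolding symp_J_def by (rule mult_four_block_mat) auto
  also have "\<dots> = - 1\<^sub>m (2 * n)" by (rule eq_matI) auto
  finally show ?thesis .
qed

lemma symp_J_inverse:
  "symp_J n * (- symp_J n) = 1\<^sub>m (2 * n)" "(- symp_J n) * symp_J n = 1\<^sub>m (2 * n)"
  using symp_J_mult_self[of n] symp_J_carrier[of n]
  by (simp_all add: uminus_mult_right_mat uminus_mult_left_mat)

lemma transpose_symp_J: "transpose_mat (symp_J n) = - symp_J n"
  unfolding symp_J_def by (rule eq_matI) auto

lemma transpose_symp_J_mult_similar_uminus: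
  assumes L: "L \<in> carrier_mat (2 * n) (2 * n)" and "transpose_mat L = L"
  shows "similar_mat (transpose_mat (- symp_J n * L)) (- (- symp_J n * L))"
proof -
  let ?J = "symp_J n"
  have J: "?J \<in> carrier_mat (2 * n) (2 * n)" by (rule symp_J_carrier)
  have "transpose_mat (- ?J * L) = L * ?J"
    using transpose_mult[of "- ?J" "2 * n" "2 * n" L] J L assms(2)
    by (simp add: transpose_uminus transpose_symp_J)
  also have "\<dots> = ?J * (- (- ?J * L)) * (- ?J)"
  proof -
    have "?J * (- (- ?J * L)) * (- ?J) = (?J * ?J) * (L * - ?J)"
      using J L by (simp add: assoc_mult_mat[of _ "2 * n" "2 * n" _ "2 * n" _ "2 * n"])
    also have "\<dots> = L * ?J" using J L by (simp add: symp_J_mult_self)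
    finally show ?thesis by simp
  qed
  finally show ?thesis
    using J L symp_J_inverse by (intro similar_matI[of _ _ ?J "- ?J" "2 * n"]) auto
qed

lemma char_poly_uminus_symp_J_mult:
  assumes "L \<in> carrier_mat (2 * n) (2 * n)" and "transpose_mat L = L"
  shows "char_poly (- (- symp_J n * L)) = char_poly (- symp_J n * L)"
  using char_poly_similar[OF transpose_symp_J_mult_similar_uminus[OF assms]] assms(1) symp_J_carrier
  by (metis char_poly_transpose_mat mult_carrier_mat uminus_carrier_iff_mat)

lemma uminus_zero_mat: "- 0\<^sub>m n m = (0\<^sub>m n m :: 'a :: group_add mat)"
  by (rule eq_matI) auto

lemma dim_diag_of [simp]: "dim_row (diag_of n lam) = n" "dim_col (diag_of n lam) = n"
  by (simp_all add: diag_of_def)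

lemma diag_of_carrier [simp]: "diag_of n lam \<in> carrier_mat n n"
  by (simp add: carrier_matI)

definition pm_diag :: "nat \<Rightarrow> (nat \<Rightarrow> complex) \<Rightarrow> complex mat" where
  "pm_diag n lam = four_block_mat (diag_of n lam) (0\<^sub>m n n) (0\<^sub>m n n) (- diag_of n lam)"

lemma pm_diag_carrier: "pm_diag n lam \<in> carrier_mat (2 * n) (2 * n)"
  unfolding pm_diag_def mult_2 by (rule four_block_carrier_mat) auto

lemma diagonal_mat_pm_diag: "diagonal_mat (pm_diag n lam)"
  unfolding diagonal_mat_def pm_diag_def diag_of_def by auto

lemma diag_mat_pm_diag:
  "diag_mat (pm_diag n lam) = map lam [0..<n] @ map (\<lambda>i. - lam i) [0..<n]"
  by (rule nth_equalityI) (auto simp: diag_mat_def pm_diag_def diag_of_def nth_append)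

lemma pm_diag_mult_symp_J:
  "pm_diag n lam * symp_J n = four_block_mat (0\<^sub>m n n) (diag_of n lam) (diag_of n lam) (0\<^sub>m n n)"
proof -
  let ?D = "diag_of n lam"
  have "pm_diag n lam * symp_J n = four_block_mat (?D * 0\<^sub>m n n + 0\<^sub>m n n * - 1\<^sub>m n) (?D * 1\<^sub>m n + 0\<^sub>m n n * 0\<^sub>m n n)
    (0\<^sub>m n n * 0\<^sub>m n n + - ?D * - 1\<^sub>m n) (0\<^sub>m n n * 1\<^sub>m n + - ?D * 0\<^sub>m n n)"
    unfolding pm_diag_def symp_J_def by (rule mult_four_block_mat) auto
  also have "\<dots> = four_block_mat (0\<^sub>m n n) ?D ?D (0\<^sub>m n n)"
    by (simp add: uminus_zero_mat uminus_mult_left_mat uminus_mult_right_mat)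
  finally show ?thesis .
qed

lemma char_poly_pm_diag:
  "char_poly (pm_diag n lam) = (\<Prod>i<n. [:- lam i, 1:] * [:lam i, 1:])"
proof -
  have "char_poly (pm_diag n lam) = (\<Prod>a\<leftarrow>diag_mat (pm_diag n lam). [:- a, 1:])"
    by (rule char_poly_upper_triangular[OF pm_diag_carrier
          diagonal_imp_upper_triangular[OF pm_diag_carrier diagonal_mat_pm_diag]])
  also have "\<dots> = (\<Prod>i<n. [:- lam i, 1:]) * (\<Prod>i<n. [:lam i, 1:])"
    by (simp add: diag_mat_pm_diag prod.distinct_set_conv_list[symmetric] lessThan_atLeast0 comp_def)
  also have "\<dots> = (\<Prod>i<n. [:- lam i, 1:] * [:lam i, 1:])"
    by (rule prod.distrib[symmetric])
  finally show ?thesis .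
qed

lemma similar_pm_diag_if_char_poly_uminus:
  fixes A :: "complex mat"
  assumes A: "A \<in> carrier_mat (2 * n) (2 * n)" and "diagonalizable A"
    and char_poly_uminus: "char_poly (- A) = char_poly A"
  shows "\<exists>lam. similar_mat A (pm_diag n lam)"
proof -
  obtain D where D_diag: "diagonal_mat D" and AD: "similar_mat A D"
    using assms(2) unfolding diagonalizable_def by blast
  have D: "D \<in> carrier_mat (2 * n) (2 * n)" using similar_matD[OF AD] A by auto
  have "mset (diag_mat D) = proots (char_poly A)"
    using proots_char_poly_diagonal[OF D D_diag] char_poly_similar[OF AD] by simp
  also have "\<dots> = proots (char_poly (- D))"
    using char_poly_uminus char_poly_similar[OF similar_mat_uminus[OF AD]] by simp
  also have "\<dots> = mset (diag_mat (- D))"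
    using D D_diag by (intro proots_char_poly_diagonal[of _ "2 * n"]) (auto simp: diagonal_mat_def)
  also have "diag_mat (- D) = map uminus (diag_mat D)"
    using D by (intro nth_equalityI) (auto simp: diag_mat_def)
  finally have "image_mset uminus (mset (diag_mat D)) = mset (diag_mat D)" by simp
  moreover have "size (mset (diag_mat D)) = 2 * n" using D by (simp add: diag_mat_def)
  ultimately obtain xs where xs: "mset (diag_mat D) = mset xs + mset (map uminus xs)"
    using mset_pairs_if_uminus_invariant by fastforce
  have "length xs = n"
    using arg_cong[OF xs, of size] D by (simp add: diag_mat_def)
  define lam where "lam = (!) xs"
  have lam_xs: "map lam [0..<n] = xs"
    using \<open>length xs = n\<close> map_nth[of xs] unfolding lam_def by simp
  then have "map (\<lambda>i. - lam i) [0..<n] = map uminus xs"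
    by auto
  then have "mset (diag_mat (pm_diag n lam)) = mset xs + mset (map uminus xs)"
    using lam_xs by (simp add: diag_mat_pm_diag)
  then have "similar_mat D (pm_diag n lam)"
    using xs by (intro similar_mat_diagonal_if_mset_diag_eq[OF D pm_diag_carrier D_diag diagonal_mat_pm_diag]) simp
  then show ?thesis using similar_mat_trans[OF AD] by blast
qed

lemma symp_equivalent_if_similar:
  fixes L D :: "complex mat"
  assumes L: "L \<in> carrier_mat (2 * n) (2 * n)" and "similar_mat (- symp_J n * L) D"
  shows "\<exists>P Q. P \<in> carrier_mat (2 * n) (2 * n) \<and> Q \<in> carrier_mat (2 * n) (2 * n) \<and>
    invertible_mat P \<and> invertible_mat Q \<and> P * L * Q = D * symp_J n \<and> P * symp_J n * Q = symp_J n"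
proof -
  define N where "N = 2 * n"
  define J where "J = symp_J n"
  have J: "J \<in> carrier_mat N N" and L: "L \<in> carrier_mat N N"
    using symp_J_carrier L unfolding J_def N_def by auto
  have JK: "J * - J = 1\<^sub>m N" and KJ: "- J * J = 1\<^sub>m N"
    using symp_J_inverse unfolding J_def N_def by auto
  obtain S T where wit: "similar_mat_wit (- J * L) D S T"
    using assms(2) unfolding similar_mat_def J_def by blast
  have "- J * L \<in> carrier_mat N N" using J L by simp
  note ST = similar_mat_witD2[OF this wit]
  have S: "S \<in> carrier_mat N N" and T: "T \<in> carrier_mat N N" and D: "D \<in> carrier_mat N N"
    using ST by auto
  have K: "- J \<in> carrier_mat N N" using J by simp
  have cancel: "S * (T * W) = W" "T * (S * W) = W" "J * (- J * W) = W" "- J * (J * W) = W"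
    if W: "W \<in> carrier_mat N N" for W
    by (simp_all only: assoc_mult_mat[OF S T W, symmetric] assoc_mult_mat[OF T S W, symmetric]
        assoc_mult_mat[OF J K W, symmetric] assoc_mult_mat[OF K J W, symmetric]
        ST(1,2) JK KJ left_mult_one_mat[OF W])
  define P where "P = T * - J"
  define Q where "Q = S * J"
  have P: "P \<in> carrier_mat N N" and Q: "Q \<in> carrier_mat N N"
    unfolding P_def Q_def using S T J by auto
  have "P * (J * S) = 1\<^sub>m N" "Q * (- J * T) = 1\<^sub>m N"
    unfolding P_def Q_def
    by (simp_all only: assoc_mult_mat[OF T K, of _ N] assoc_mult_mat[OF S J, of _ N]
        mult_carrier_mat[OF J S] mult_carrier_mat[OF K T] cancel[OF S] cancel[OF T] ST(1,2))
  then have "invertible_mat P" "invertible_mat Q"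
    using invertible_mat_if_right_inverse P Q S T J by (meson mult_carrier_mat uminus_carrier_mat)+
  moreover have "P * L * Q = D * J"
  proof -
    have "P * L = T * (- J * L)" unfolding P_def using assoc_mult_mat[OF T K L] .
    also have "\<dots> = D * T" using ST(3) cancel(2) D T by (simp add: assoc_mult_mat[OF S D T])
    finally have "P * L * Q = D * T * (S * J)" unfolding Q_def by simp
    also have "\<dots> = D * J" using cancel(2)[OF J] by (simp add: assoc_mult_mat[OF D T mult_carrier_mat[OF S J]])
    finally show ?thesis .
  qed
  moreover have "P * J * Q = J"
  proof -
    have "P * J = T" unfolding P_def using assoc_mult_mat[OF T K J] KJ T by simp
    then show ?thesis unfolding Q_def using cancel(2)[OF J] by simp
  qed
  ultimately show ?thesis
    using P Q by (simp only: J_def N_def) blast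
qed

theorem lemma1:
  fixes n :: nat and L :: "complex mat"
  assumes "n \<ge> 1"
    and "L \<in> carrier_mat (2*n) (2*n)"
    and "transpose_mat L = L"
    and "diagonalizable ((- symp_J n) * L)"
  shows "\<exists>P Q lam.
           P \<in> carrier_mat (2*n) (2*n) \<and> Q \<in> carrier_mat (2*n) (2*n) \<and>
           invertible_mat P \<and> invertible_mat Q \<and>
           P * L * Q = four_block_mat (0\<^sub>m n n) (diag_of n lam) (diag_of n lam) (0\<^sub>m n n) \<and>
           P * symp_J n * Q = symp_J n \<and>
           char_poly ((- symp_J n) * L) = (\<Prod>i<n. [:- lam i, 1:] * [:lam i, 1:])"
proof -
  have "- symp_J n * L \<in> carrier_mat (2 * n) (2 * n)"
    using mult_carrier_mat[OF uminus_carrier_mat[OF symp_J_carrier] assms(2)] .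
  then obtain lam where sim: "similar_mat (- symp_J n * L) (pm_diag n lam)"
    using similar_pm_diag_if_char_poly_uminus assms(4) char_poly_uminus_symp_J_mult[OF assms(2,3)]
    by blast
  obtain P Q where "P \<in> carrier_mat (2 * n) (2 * n)" "Q \<in> carrier_mat (2 * n) (2 * n)"
    "invertible_mat P" "invertible_mat Q" "P * L * Q = pm_diag n lam * symp_J n"
    "P * symp_J n * Q = symp_J n"
    using symp_equivalent_if_similar[OF assms(2) sim] by blast
  moreover have "char_poly (- symp_J n * L) = (\<Prod>i<n. [:- lam i, 1:] * [:lam i, 1:])"
    using char_poly_similar[OF sim] char_poly_pm_diag by simp
  ultimately show ?thesis
    unfolding pm_diag_mult_symp_J by blast
qed

end
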